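(* Let $\{W(t),t\ge0\}$ be a $d$-dimensional Brownian motion and $\beta\in\mathcal M^d$. Then almost surely $$\liminf_{t\searrow0}\frac1t\,|W(t)^T\beta W(t)|=0.$$
   Context: $\mathcal M^d$ denotes the set of real $d\times d$ matrices. *)

theory Defs
  imports "HOL-Probability.Probability"
begin

text \<open>A d-dimensional (standard) Brownian motion started at 0 on the probability
space M, indexed by time t \<ge> 0 (values for t < 0 are irrelevant).\<close>

definition brownian_motion :: "'a measure \<Rightarrow> (real \<Rightarrow> 'a \<Rightarrow> real^'d) \<Rightarrow> bool" where
  "brownian_motion M W \<longleftrightarrow>
     prob_space M \<and>
     (\<forall>t\<ge>0. W t \<in> borel_measurable M) \<and>
     (AE \<omega> in M. W 0 \<omega> = 0) \<and>
     (AE \<omega> in M. continuous_on {0..} (\<lambda>t. W t \<omega>)) \<and>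
     (\<forall>s t. 0 \<le> s \<and> s < t \<longrightarrow>
        distributed M lborel (\<lambda>\<omega>. W t \<omega> - W s \<omega>)
          (\<lambda>x. ennreal (\<Prod>i\<in>UNIV. normal_density 0 (sqrt (t - s)) (x $ i)))) \<and>
     (\<forall>(n::nat) (\<tau>::nat \<Rightarrow> real). 0 \<le> \<tau> 0 \<and> (\<forall>i<n. \<tau> i < \<tau> (Suc i)) \<longrightarrow>
        prob_space.indep_vars M (\<lambda>_. borel) (\<lambda>i \<omega>. W (\<tau> (Suc i)) \<omega> - W (\<tau> i) \<omega>) {..<n})"

end

theory Submission
  imports Defs
begin

(* Since |x . (beta x)| <= C |x|^2, it suffices to find for every eps > 0, almost surely,
   arbitrarily small t with |W t| <= 2 delta sqrt t, where 4 C delta^2 = eps.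
   Choose times t_k -> 0 with t_(k+1) <= t_k / 2, each so small (by continuity of the paths
   at 0) that P(|W t_(k+1)| > delta sqrt t_k) <= 2^-k; by Borel-Cantelli, eventually
   |W t_(k+1)| <= delta sqrt t_k. The increments W t_k - W t_(k+1) are independent, and since
   their variance t_k - t_(k+1) >= t_k / 2 is comparable to t_k, each has norm at most
   delta sqrt t_k with probability at least some p > 0 not depending on k. By the second
   Borel-Cantelli lemma this happens infinitely often almost surely, and for those k the
   triangle inequality gives |W t_k| <= 2 delta sqrt t_k. *)

lemma
  assumes "brownian_motion M W"
  shows brownian_motion_prob_space: "prob_space M"
    and brownian_motion_measurable: "0 \<le> t \<Longrightarrow> W t \<in> borel_measurable M"
    and brownian_motion_AE_zero: "AE \<omega> in M. W 0 \<omega> = 0"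
    and brownian_motion_AE_continuous: "AE \<omega> in M. continuous_on {0..} (\<lambda>t. W t \<omega>)"
    and brownian_motion_increment_distributed: "0 \<le> s \<Longrightarrow> s < t \<Longrightarrow>
      distributed M lborel (\<lambda>\<omega>. W t \<omega> - W s \<omega>)
        (\<lambda>x. ennreal (\<Prod>i\<in>UNIV. normal_density 0 (sqrt (t - s)) (x $ i)))"
    and brownian_motion_indep_increments: "0 \<le> \<tau> 0 \<Longrightarrow> (\<And>i. i < n \<Longrightarrow> \<tau> i < \<tau> (Suc i)) \<Longrightarrow>
      prob_space.indep_vars M (\<lambda>_. borel) (\<lambda>i \<omega>. W (\<tau> (Suc i)) \<omega> - W (\<tau> i) \<omega>) {..<n}"
  using assms unfolding brownian_motion_def by auto

lemma Liminf_le_if_frequently: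
  fixes f :: "'a \<Rightarrow> 'b::complete_linorder"
  assumes "\<exists>\<^sub>F x in F. f x \<le> c"
  shows "Liminf F f \<le> c"
  unfolding Liminf_def
proof (rule SUP_least)
  fix P assume "P \<in> {P. eventually P F}"
  with assms obtain x where "P x" "f x \<le> c"
    using frequently_eventually_conj[of "\<lambda>x. f x \<le> c" F P] by (auto elim: frequentlyE)
  then show "Inf (f ` {x. P x}) \<le> c"
    by (meson INF_lower2 mem_Collect_eq)
qed

lemma frequently_filterlim_compose:
  assumes "filterlim s G F" "\<exists>\<^sub>F x in F. P (s x)"
  shows "\<exists>\<^sub>F y in G. P y"
proof (rule ccontr)
  assume "\<not> (\<exists>\<^sub>F y in G. P y)"
  then have "\<forall>\<^sub>F y in G. \<not> P y"
    by (simp add: not_frequently)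
  then have "\<forall>\<^sub>F x in F. \<not> P (s x)"
    by (rule filterlim_iff[THEN iffD1, OF assms(1), rule_format])
  with assms(2) show False
    by (simp add: frequently_def)
qed

lemma halving_sequence_filterlim_at_right_0:
  fixes t :: "nat \<Rightarrow> real"
  assumes t_pos: "\<And>k. 0 < t k" and t_half: "\<And>k. t (Suc k) \<le> t k / 2"
  shows "filterlim t (at_right 0) sequentially"
proof -
  have t_le: "t k \<le> t 0 * (1/2) ^ k" for k
  proof (induction k)
    case (Suc k)
    then show ?case
      using t_half[of k] by simp
  qed simp
  have "t \<longlonglongrightarrow> 0"
  proof (rule tendsto_sandwich[OF _ _ tendsto_const])
    show "(\<lambda>k. t 0 * (1/2) ^ k) \<longlonglongrightarrow> 0"
      using tendsto_mult[OF tendsto_const LIMSEQ_realpow_zero[of "1/2"], of "t 0"] by simp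
    show "\<forall>\<^sub>F k in sequentially. 0 \<le> t k"
      by (intro always_eventually allI less_imp_le t_pos)
    show "\<forall>\<^sub>F k in sequentially. t k \<le> t 0 * (1/2) ^ k"
      by (intro always_eventually allI t_le)
  qed
  then show ?thesis
    by (rule tendsto_imp_filterlim_at_right) (simp add: t_pos)
qed

lemma (in finite_measure) measure_tendsto_0_if_AE_eventually_notin:
  assumes sets: "\<And>n. A n \<in> sets M"
    and AE: "AE x in M. \<forall>\<^sub>F n in sequentially. x \<notin> A n"
  shows "(\<lambda>n. measure M (A n)) \<longlonglongrightarrow> 0"
proof -
  have "(\<lambda>n. integral\<^sup>L M (indicator (A n) :: 'a \<Rightarrow> real)) \<longlonglongrightarrow> integral\<^sup>L M (\<lambda>_. 0)"
  proof (rule integral_dominated_convergence[where w = "\<lambda>_. 1"])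
    show "AE x in M. (\<lambda>n. indicator (A n) x :: real) \<longlonglongrightarrow> 0"
      using AE by eventually_elim (auto intro!: tendsto_eventually elim!: eventually_mono)
  qed (use sets in auto)
  then show ?thesis
    using sets by simp
qed

lemma (in prob_space) indep_vars_reindex:
  assumes "inj_on h J" "indep_vars M' X (h ` J)"
  shows "indep_vars (\<lambda>j. M' (h j)) (\<lambda>j. X (h j)) J"
proof -
  let ?F = "\<lambda>i. {X i -` A \<inter> space M | A. A \<in> sets (M' i)}"
  have indep: "indep_sets ?F (h ` J)"
    using assms(2) by (simp add: indep_vars_def2)
  have "indep_sets (\<lambda>j. ?F (h j)) J"
  proof (rule indep_setsI)
    show "?F (h j) \<subseteq> events" if "j \<in> J" for j
      using indep that by (simp add: indep_sets_def)
  next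
    fix A K assume K: "K \<noteq> {}" "K \<subseteq> J" "finite K" and A: "\<forall>j\<in>K. A j \<in> ?F (h j)"
    define A' where "A' i = A (the_inv_into K h i)" for i
    have "inj_on h K"
      using assms(1) K(2) by (rule inj_on_subset)
    then have A'_h: "A' (h j) = A j" if "j \<in> K" for j
      using that by (simp add: A'_def the_inv_into_f_f)
    have "prob (\<Inter>j\<in>K. A j) = prob (\<Inter>i\<in>h ` K. A' i)"
      by (simp add: A'_h)
    also have "\<dots> = (\<Prod>i\<in>h ` K. prob (A' i))"
      using K A A'_h by (intro indep_setsD[OF indep]) auto
    also have "\<dots> = (\<Prod>j\<in>K. prob (A j))"
      using \<open>inj_on h K\<close> by (simp add: prod.reindex A'_h)
    finally show "prob (\<Inter>j\<in>K. A j) = (\<Prod>j\<in>K. prob (A j))" .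
  qed
  with assms(2) show ?thesis
    by (simp add: indep_vars_def2)
qed

lemma (in prob_space) indep_vars_UNIV_if_lessThan:
  fixes X :: "nat \<Rightarrow> 'a \<Rightarrow> 'b"
  assumes indep: "\<And>N. indep_vars M' X {..<N}"
  shows "indep_vars M' X UNIV"
  unfolding indep_vars_def2
proof
  show "\<forall>k\<in>UNIV. random_variable (M' k) (X k)"
    using indep[of "Suc k" for k] by (auto simp: indep_vars_def2)
  show "indep_sets (\<lambda>k. {X k -` A \<inter> space M |A. A \<in> sets (M' k)}) UNIV"
  proof (subst indep_sets_finite_index_sets, intro allI impI)
    fix J :: "nat set" assume "finite J"
    then have "J \<subseteq> {..<Suc (Max J)}"
      by (auto simp: less_Suc_eq_le)
    then have "indep_vars M' X J"
      by (rule indep_vars_subset[OF indep])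
    then show "indep_sets (\<lambda>k. {X k -` A \<inter> space M |A. A \<in> sets (M' k)}) J"
      by (simp add: indep_vars_def2)
  qed
qed

lemma (in prob_space) AE_frequently_if_indep_events_prob_ge:
  assumes indep: "indep_events A UNIV" and "0 < p" and p: "\<And>n. p \<le> prob (A n)"
  shows "AE x in M. \<exists>\<^sub>F n in sequentially. x \<in> A n"
proof -
  have [measurable]: "A n \<in> events" for n
    using indep by (auto simp: indep_events_def)
  \<comment> \<open>complements of independent events are again independent\<close>
  have indep_compl: "indep_sets (\<lambda>n. sigma_sets (space M) {A n}) UNIV"
    using indep unfolding indep_events_def_alt by (rule indep_sets_sigma) (simp add: Int_stable_def)
  have never_bound: "prob {x\<in>space M. \<forall>n\<ge>m. x \<notin> A n} \<le> (1 - p) ^ Suc N" for m N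
  proof -
    have "prob {x\<in>space M. \<forall>n\<ge>m. x \<notin> A n} \<le> prob (\<Inter>n\<in>{m..m+N}. space M - A n)"
      by (intro finite_measure_mono) auto
    also have "\<dots> = (\<Prod>n\<in>{m..m+N}. prob (space M - A n))"
      by (intro indep_setsD[OF indep_compl]) (auto intro: sigma_sets.Compl sigma_sets.Basic)
    also have "\<dots> = (\<Prod>n\<in>{m..m+N}. 1 - prob (A n))"
      by (simp add: prob_compl)
    also have "\<dots> \<le> (\<Prod>n\<in>{m..m+N}. 1 - p)"
      using p by (intro prod_mono) auto
    finally show ?thesis
      by simp
  qed
  have "p \<le> 1"
    using p[of 0] prob_le_1[of "A 0"] by linarith
  have never_null: "{x\<in>space M. \<forall>n\<ge>m. x \<notin> A n} \<in> null_sets M" for m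
  proof -
    have "(\<lambda>N. (1 - p) ^ Suc N) \<longlonglongrightarrow> 0"
      using \<open>0 < p\<close> \<open>p \<le> 1\<close> by (intro LIMSEQ_Suc LIMSEQ_realpow_zero) auto
    then have "prob {x\<in>space M. \<forall>n\<ge>m. x \<notin> A n} \<le> 0"
      using never_bound by (intro LIMSEQ_le_const) auto
    then show ?thesis
      by (auto simp: null_sets_def emeasure_eq_measure intro!: antisym)
  qed
  have "AE x in M. \<exists>n\<ge>m. x \<in> A n" for m
    by (rule AE_I'[OF never_null[of m]]) auto
  then show ?thesis
    by (simp add: frequently_sequentially AE_all_countable)
qed

lemma (in prob_space) distributed_emeasure_ge:
  assumes "distributed M lborel X f" "B \<in> sets lborel" "\<And>x. x \<in> B \<Longrightarrow> c \<le> f x"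
  shows "c * emeasure lborel B \<le> emeasure M (X -` B \<inter> space M)"
proof -
  have "c * emeasure lborel B = (\<integral>\<^sup>+x. c * indicator B x \<partial>lborel)"
    using assms(2) by (simp add: nn_integral_cmult_indicator)
  also have "\<dots> \<le> (\<integral>\<^sup>+x\<in>B. f x \<partial>lborel)"
    using assms(3) by (intro nn_integral_mono) (auto split: split_indicator)
  also have "\<dots> = emeasure M (X -` B \<inter> space M)"
    using distributed_emeasure[OF assms(1,2)] by simp
  finally show ?thesis .
qed

lemma normal_density_ge:
  fixes v t x \<delta> :: real
  assumes "0 < v" "v \<le> t" "t \<le> 2 * v" and x: "\<bar>x\<bar> \<le> \<delta> * sqrt t"
  shows "exp (- \<delta>\<^sup>2) / sqrt (2 * pi * t) \<le> normal_density 0 (sqrt v) x"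
proof -
  have "x\<^sup>2 \<le> (\<delta> * sqrt t)\<^sup>2"
    using x by (metis abs_ge_zero abs_le_square_iff abs_of_nonneg order_trans power2_abs)
  also have "\<dots> = \<delta>\<^sup>2 * t"
    using assms by (simp add: power_mult_distrib)
  also have "\<dots> \<le> \<delta>\<^sup>2 * (2 * v)"
    using assms by (intro mult_left_mono) auto
  finally have "x\<^sup>2 / (2 * v) \<le> \<delta>\<^sup>2"
    using assms by (simp add: divide_le_eq mult.commute)
  then have "exp (- \<delta>\<^sup>2) \<le> exp (- x\<^sup>2 / (2 * v))"
    by simp
  moreover have "1 / sqrt (2 * pi * t) \<le> 1 / sqrt (2 * pi * v)"
    using assms by (simp add: frac_le)
  ultimately have "1 / sqrt (2 * pi * t) * exp (- \<delta>\<^sup>2) \<le> 1 / sqrt (2 * pi * v) * exp (- x\<^sup>2 / (2 * v))"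
    using assms by (intro mult_mono) auto
  moreover have "normal_density 0 (sqrt v) x = 1 / sqrt (2 * pi * v) * exp (- x\<^sup>2 / (2 * v))"
    using assms by (simp add: normal_density_def)
  ultimately show ?thesis
    by simp
qed

lemma prod_normal_density_ge:
  fixes x :: "real^'n"
  assumes "0 < v" "v \<le> t" "t \<le> 2 * v" "\<And>i. \<bar>x $ i\<bar> \<le> \<delta> * sqrt t"
  shows "(exp (- \<delta>\<^sup>2) / sqrt (2 * pi * t)) ^ CARD('n) \<le> (\<Prod>i\<in>UNIV. normal_density 0 (sqrt v) (x $ i))"
  unfolding prod_constant[symmetric] using assms normal_density_ge[OF assms(1-3)]
  by (intro prod_mono) auto

lemma mem_cube_cart:
  fixes x :: "real^'n"
  shows "x \<in> cbox (- (\<chi> i. c)) (\<chi> i. c) \<longleftrightarrow> (\<forall>i. \<bar>x $ i\<bar> \<le> c)"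
  unfolding mem_box_cart by (auto simp: abs_le_iff) (metis minus_le_iff)+

lemma emeasure_lborel_cube_cart:
  assumes "0 \<le> c"
  shows "emeasure lborel (cbox (- (\<chi> i. c)) (\<chi> i. c) :: (real^'n) set) = ennreal ((2 * c) ^ CARD('n))"
proof -
  have "cbox (- (\<chi> i. c)) (\<chi> i. c) \<noteq> ({} :: (real^'n) set)"
    using mem_cube_cart[of 0 c] assms by auto
  then have "measure lborel (cbox (- (\<chi> i. c)) (\<chi> i. c) :: (real^'n) set) = (2 * c) ^ CARD('n)"
    by (subst content_cbox_cart) auto
  then show ?thesis
    by (simp add: emeasure_eq_measure2 emeasure_lborel_cbox_finite)
qed

lemma matrix_quadratic_form_bounded:
  fixes \<beta> :: "real^'n^'n"
  obtains C where "0 < C" "\<And>x. \<bar>x \<bullet> (\<beta> *v x)\<bar> \<le> C * (norm x)\<^sup>2"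
proof -
  obtain C where "0 < C" and C: "\<And>x. norm (\<beta> *v x) \<le> norm x * C"
    using bounded_linear.pos_bounded[OF matrix_vector_mul_bounded_linear[of \<beta>]] by blast
  have "\<bar>x \<bullet> (\<beta> *v x)\<bar> \<le> C * (norm x)\<^sup>2" for x
  proof -
    have "\<bar>x \<bullet> (\<beta> *v x)\<bar> \<le> norm x * norm (\<beta> *v x)"
      by (rule Cauchy_Schwarz_ineq2)
    also have "\<dots> \<le> norm x * (norm x * C)"
      by (intro mult_left_mono C) auto
    finally show ?thesis
      by (simp add: power2_eq_square mult_ac)
  qed
  with \<open>0 < C\<close> that show ?thesis
    by blast
qed

lemma brownian_motion_increment_small_prob_ge:
  fixes W :: "real \<Rightarrow> 'a \<Rightarrow> real^'d"
  assumes bm: "brownian_motion M W" and st: "0 \<le> s" "s \<le> t / 2" "0 < t" and "0 < \<delta>"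
  shows "(2 * \<delta> * exp (- \<delta>\<^sup>2) / (real CARD('d) * sqrt (2 * pi))) ^ CARD('d)
           \<le> measure M {\<omega>\<in>space M. norm (W t \<omega> - W s \<omega>) \<le> \<delta> * sqrt t}"
proof -
  interpret prob_space M
    using bm by (rule brownian_motion_prob_space)
  define d where "d = real CARD('d)"
  have "1 \<le> d"
    by (simp add: d_def Suc_le_eq)
  define c where "c = \<delta> * sqrt t / d"
  have "0 < c" "c \<le> \<delta> * sqrt t"
    using \<open>0 < \<delta>\<close> \<open>0 < t\<close> \<open>1 \<le> d\<close> by (simp_all add: c_def divide_le_eq)
  define B :: "(real^'d) set" where "B = cbox (- (\<chi> i. c)) (\<chi> i. c)"
  have norm_B: "norm x \<le> \<delta> * sqrt t" if "x \<in> B" for x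
  proof -
    have "norm x \<le> (\<Sum>i\<in>UNIV. \<bar>x $ i\<bar>)"
      by (rule norm_le_l1_cart)
    also have "\<dots> \<le> (\<Sum>i\<in>(UNIV::'d set). c)"
      using that by (intro sum_mono) (simp add: B_def mem_cube_cart)
    also have "\<dots> = \<delta> * sqrt t"
      using \<open>1 \<le> d\<close> by (simp add: c_def d_def)
    finally show ?thesis .
  qed
  define L where "L = (exp (- \<delta>\<^sup>2) / sqrt (2 * pi * t)) ^ CARD('d)"
  have density_B: "ennreal L \<le> ennreal (\<Prod>i\<in>UNIV. normal_density 0 (sqrt (t - s)) (x $ i))"
    if "x \<in> B" for x
    using st that \<open>c \<le> \<delta> * sqrt t\<close> unfolding L_def
    by (intro ennreal_leI prod_normal_density_ge) (auto simp: B_def mem_cube_cart intro: order_trans)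
  have const: "(2 * \<delta> * exp (- \<delta>\<^sup>2) / (real CARD('d) * sqrt (2 * pi))) ^ CARD('d) = L * (2 * c) ^ CARD('d)"
  proof -
    have "2 * \<delta> * exp (- \<delta>\<^sup>2) / (d * sqrt (2 * pi)) = exp (- \<delta>\<^sup>2) / sqrt (2 * pi * t) * (2 * c)"
      using \<open>0 < t\<close> \<open>1 \<le> d\<close> by (simp add: c_def real_sqrt_mult field_simps)
    then show ?thesis
      unfolding L_def d_def by (simp only: power_mult_distrib)
  qed
  have [measurable]: "W t \<in> borel_measurable M" "W s \<in> borel_measurable M"
    using bm st by (auto intro: brownian_motion_measurable)
  have "ennreal (L * (2 * c) ^ CARD('d)) = ennreal L * emeasure lborel B"
    unfolding B_def emeasure_lborel_cube_cart[OF less_imp_le[OF \<open>0 < c\<close>]]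
    using \<open>0 < c\<close> \<open>0 < t\<close> by (intro ennreal_mult) (auto simp: L_def)
  also have "\<dots> \<le> emeasure M ((\<lambda>\<omega>. W t \<omega> - W s \<omega>) -` B \<inter> space M)"
    using st density_B
    by (intro distributed_emeasure_ge[OF brownian_motion_increment_distributed[OF bm]])
       (auto simp: B_def)
  also have "\<dots> \<le> emeasure M {\<omega>\<in>space M. norm (W t \<omega> - W s \<omega>) \<le> \<delta> * sqrt t}"
    using norm_B by (intro emeasure_mono) auto
  also have "\<dots> = ennreal (measure M {\<omega>\<in>space M. norm (W t \<omega> - W s \<omega>) \<le> \<delta> * sqrt t})"
    by (rule emeasure_eq_measure)
  finally show ?thesis
    unfolding const by (simp add: ennreal_le_iff)
qed

lemma brownian_motion_prob_norm_gt_tendsto_0: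
  fixes W :: "real \<Rightarrow> 'a \<Rightarrow> real^'d"
  assumes bm: "brownian_motion M W" and "0 < r"
  shows "((\<lambda>s. measure M {\<omega>\<in>space M. r < norm (W s \<omega>)}) \<longlongrightarrow> 0) (at_right 0)"
proof (rule tendsto_at_right_sequentially[of 0 1])
  interpret prob_space M
    using bm by (rule brownian_motion_prob_space)
  fix S :: "nat \<Rightarrow> real" assume S_pos: "\<And>n. 0 < S n" and "S \<longlonglongrightarrow> 0"
  then have S_lim: "filterlim S (at_right 0) sequentially"
    by (intro tendsto_imp_filterlim_at_right) auto
  have [measurable]: "W (S n) \<in> borel_measurable M" for n
    using bm S_pos by (intro brownian_motion_measurable) (auto intro: less_imp_le)
  show "(\<lambda>n. measure M {\<omega>\<in>space M. r < norm (W (S n) \<omega>)}) \<longlonglongrightarrow> 0"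
  proof (rule measure_tendsto_0_if_AE_eventually_notin)
    show "AE \<omega> in M. \<forall>\<^sub>F n in sequentially. \<omega> \<notin> {\<omega>\<in>space M. r < norm (W (S n) \<omega>)}"
      using brownian_motion_AE_zero[OF bm] brownian_motion_AE_continuous[OF bm]
    proof eventually_elim
      case (elim \<omega>)
      have "((\<lambda>t. W t \<omega>) \<longlongrightarrow> W 0 \<omega>) (at 0 within {0..})"
        using elim(2) unfolding continuous_on_def by blast
      with elim have "((\<lambda>t. W t \<omega>) \<longlongrightarrow> 0) (at_right 0)"
        by (simp add: at_within_Ici_at_right)
      then have "(\<lambda>n. norm (W (S n) \<omega>)) \<longlonglongrightarrow> 0"
        by (intro tendsto_norm_zero filterlim_compose[OF _ S_lim])
      then have "\<forall>\<^sub>F n in sequentially. norm (W (S n) \<omega>) < r"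
        using \<open>0 < r\<close> by (rule order_tendstoD(2))
      then show ?case
        by (auto elim: eventually_mono)
    qed
  qed measurable
qed simp

lemma brownian_motion_halving_times_exist:
  fixes W :: "real \<Rightarrow> 'a \<Rightarrow> real^'d"
  assumes bm: "brownian_motion M W" and "0 < \<delta>"
  obtains t :: "nat \<Rightarrow> real"
  where "\<And>k. 0 < t k" "\<And>k. t (Suc k) \<le> t k / 2"
    "\<And>k. measure M {\<omega>\<in>space M. \<delta> * sqrt (t k) < norm (W (t (Suc k)) \<omega>)} \<le> (1/2) ^ k"
proof -
  have "\<exists>t. \<forall>k. 0 < t k \<and> t (Suc k) \<le> t k / 2 \<and>
      measure M {\<omega>\<in>space M. \<delta> * sqrt (t k) < norm (W (t (Suc k)) \<omega>)} \<le> (1/2) ^ k"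
  proof (rule dependent_nat_choice)
    fix x :: real and k assume "0 < x"
    have "\<forall>\<^sub>F y in at_right 0. measure M {\<omega>\<in>space M. \<delta> * sqrt x < norm (W y \<omega>)} < (1/2) ^ k"
      using \<open>0 < x\<close> \<open>0 < \<delta>\<close>
      by (intro order_tendstoD(2)[OF brownian_motion_prob_norm_gt_tendsto_0[OF bm]]) auto
    moreover have "\<forall>\<^sub>F y in at_right 0. 0 < y \<and> y < x / 2"
      using \<open>0 < x\<close> by (auto simp: eventually_at_right_field intro!: exI[of _ "x / 2"])
    ultimately have "\<forall>\<^sub>F y in at_right 0. 0 < y \<and> y \<le> x / 2 \<and>
        measure M {\<omega>\<in>space M. \<delta> * sqrt x < norm (W y \<omega>)} \<le> (1/2) ^ k"
      by eventually_elim auto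
    then show "\<exists>y. 0 < y \<and> y \<le> x / 2 \<and>
        measure M {\<omega>\<in>space M. \<delta> * sqrt x < norm (W y \<omega>)} \<le> (1/2) ^ k"
      by (intro eventually_happens'[of "at_right 0"]) auto
  qed (rule exI[of _ 1], simp)
  with that show ?thesis
    by blast
qed

lemma brownian_motion_AE_eventually_norm_le:
  fixes W :: "real \<Rightarrow> 'a \<Rightarrow> real^'d"
  assumes bm: "brownian_motion M W" and "\<And>k. 0 \<le> s k"
    and summable: "summable (\<lambda>k. measure M {\<omega>\<in>space M. r k < norm (W (s k) \<omega>)})"
  shows "AE \<omega> in M. \<forall>\<^sub>F k in sequentially. norm (W (s k) \<omega>) \<le> r k"
proof -
  interpret prob_space M
    using bm by (rule brownian_motion_prob_space)
  have [measurable]: "W (s k) \<in> borel_measurable M" for k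
    using bm assms(2) by (rule brownian_motion_measurable)
  have "AE \<omega> in M. \<forall>\<^sub>F k in sequentially. \<omega> \<in> space M - {\<omega>\<in>space M. r k < norm (W (s k) \<omega>)}"
    using summable by (intro borel_cantelli_AE1) (auto simp: emeasure_eq_measure)
  then show ?thesis
    by eventually_elim (auto simp: not_less elim: eventually_mono)
qed

lemma brownian_motion_indep_backward_increments:
  fixes W :: "real \<Rightarrow> 'a \<Rightarrow> real^'d"
  assumes bm: "brownian_motion M W" and t: "\<And>k. 0 \<le> t k" "\<And>k. t (Suc k) < t k"
  shows "prob_space.indep_vars M (\<lambda>_. borel) (\<lambda>k \<omega>. W (t k) \<omega> - W (t (Suc k)) \<omega>) UNIV"
proof -
  interpret prob_space M
    using bm by (rule brownian_motion_prob_space)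
  define X where "X = (\<lambda>k \<omega>. W (t k) \<omega> - W (t (Suc k)) \<omega>)"
  have "indep_vars (\<lambda>_. borel) X {..<N}" for N
  proof -
    \<comment> \<open>The definition gives independence along increasing times, so reverse the first N indices.\<close>
    define h where "h k = N - Suc k" for k
    have "t (N - i) < t (N - Suc i)" if "i < N" for i
      using t(2)[of "N - Suc i"] that by (simp add: Suc_diff_Suc)
    then have "indep_vars (\<lambda>_. borel) (\<lambda>i \<omega>. W (t (N - Suc i)) \<omega> - W (t (N - i)) \<omega>) {..<N}"
      using brownian_motion_indep_increments[OF bm, of "\<lambda>i. t (N - i)" N] t by simp
    moreover have "inj_on h {..<N}"
      by (auto simp: h_def inj_on_def)
    moreover from this have "h ` {..<N} = {..<N}"
      by (intro endo_inj_surj) (auto simp: h_def)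
    ultimately have "indep_vars (\<lambda>_. borel) (\<lambda>k \<omega>. W (t (N - Suc (h k))) \<omega> - W (t (N - h k)) \<omega>) {..<N}"
      using indep_vars_reindex[of h "{..<N}"] by simp
    moreover have "X k = (\<lambda>\<omega>. W (t (N - Suc (h k))) \<omega> - W (t (N - h k)) \<omega>)" if "k < N" for k
      using that by (simp add: X_def h_def Suc_diff_Suc)
    ultimately show ?thesis
      using indep_vars_cong[where I = "{..<N}" and J = "{..<N}" and X = X and M' = "\<lambda>_. borel"] by simp
  qed
  then have "indep_vars (\<lambda>_. borel) X UNIV"
    by (rule indep_vars_UNIV_if_lessThan)
  then show ?thesis
    unfolding X_def .
qed

lemma brownian_motion_AE_frequently_increment_le:
  fixes W :: "real \<Rightarrow> 'a \<Rightarrow> real^'d"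
  assumes bm: "brownian_motion M W" and "0 < \<delta>"
    and t_pos: "\<And>k. 0 < t k" and t_half: "\<And>k. t (Suc k) \<le> t k / 2"
  shows "AE \<omega> in M. \<exists>\<^sub>F k in sequentially. norm (W (t k) \<omega> - W (t (Suc k)) \<omega>) \<le> \<delta> * sqrt (t k)"
proof -
  interpret prob_space M
    using bm by (rule brownian_motion_prob_space)
  define V where "V k = {\<omega>\<in>space M. norm (W (t k) \<omega> - W (t (Suc k)) \<omega>) \<le> \<delta> * sqrt (t k)}" for k
  define p where "p = (2 * \<delta> * exp (- \<delta>\<^sup>2) / (real CARD('d) * sqrt (2 * pi))) ^ CARD('d)"
  have "indep_events V UNIV"
    unfolding V_def
  proof (rule indep_eventsI_indep_vars[OF brownian_motion_indep_backward_increments[OF bm],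
        where P = "\<lambda>k x. norm x \<le> \<delta> * sqrt (t k)"])
    show "0 \<le> t k" for k
      using t_pos[of k] by simp
    show "t (Suc k) < t k" for k
      using t_pos[of k] t_half[of k] by linarith
    show "{x :: real^'d \<in> space borel. norm x \<le> \<delta> * sqrt (t k)} \<in> sets borel" for k
      by measurable
  qed
  moreover have "0 < p"
    using \<open>0 < \<delta>\<close> by (simp add: p_def)
  moreover have "p \<le> measure M (V k)" for k
    unfolding p_def V_def using t_pos[of k] t_pos[of "Suc k"] t_half[of k] \<open>0 < \<delta>\<close>
    by (intro brownian_motion_increment_small_prob_ge[OF bm]) auto
  ultimately have "AE \<omega> in M. \<exists>\<^sub>F k in sequentially. \<omega> \<in> V k"
    by (rule AE_frequently_if_indep_events_prob_ge)
  then show ?thesis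
    by eventually_elim (auto simp: V_def elim: frequently_elim1)
qed

lemma brownian_motion_AE_Liminf_quadratic_form_le:
  fixes W :: "real \<Rightarrow> 'a \<Rightarrow> real^'d" and \<beta> :: "real^'d^'d" and \<epsilon> :: real
  assumes bm: "brownian_motion M W" and "0 < \<epsilon>"
  shows "AE \<omega> in M. Liminf (at_right 0) (\<lambda>t. ereal (\<bar>W t \<omega> \<bullet> (\<beta> *v W t \<omega>)\<bar> / t)) \<le> \<epsilon>"
proof -
  obtain C where "0 < C" and C: "\<And>x. \<bar>x \<bullet> (\<beta> *v x)\<bar> \<le> C * (norm x)\<^sup>2"
    using matrix_quadratic_form_bounded[of \<beta>] by blast
  define \<delta> where "\<delta> = sqrt (\<epsilon> / (4 * C))"
  have "0 < \<delta>" "4 * C * \<delta>\<^sup>2 = \<epsilon>"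
    using \<open>0 < \<epsilon>\<close> \<open>0 < C\<close> by (simp_all add: \<delta>_def)
  obtain t where t_pos: "\<And>k. 0 < t k" and t_half: "\<And>k. t (Suc k) \<le> t k / 2"
    and t_tail: "\<And>k. measure M {\<omega>\<in>space M. \<delta> * sqrt (t k) < norm (W (t (Suc k)) \<omega>)} \<le> (1/2) ^ k"
    using brownian_motion_halving_times_exist[OF bm \<open>0 < \<delta>\<close>] by blast
  have t_lim: "filterlim t (at_right 0) sequentially"
    using t_pos t_half by (rule halving_sequence_filterlim_at_right_0)
  have "summable (\<lambda>k. measure M {\<omega>\<in>space M. \<delta> * sqrt (t k) < norm (W (t (Suc k)) \<omega>)})"
    using t_tail by (intro summable_comparison_test'[OF summable_geometric[of "1/2"]]) auto
  then have "AE \<omega> in M. \<forall>\<^sub>F k in sequentially. norm (W (t (Suc k)) \<omega>) \<le> \<delta> * sqrt (t k)"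
    using t_pos by (intro brownian_motion_AE_eventually_norm_le[OF bm]) (auto intro: less_imp_le)
  moreover have "AE \<omega> in M. \<exists>\<^sub>F k in sequentially. norm (W (t k) \<omega> - W (t (Suc k)) \<omega>) \<le> \<delta> * sqrt (t k)"
    using bm \<open>0 < \<delta>\<close> t_pos t_half by (rule brownian_motion_AE_frequently_increment_le)
  ultimately show ?thesis
  proof eventually_elim
    case (elim \<omega>)
    have "\<exists>\<^sub>F k in sequentially. \<bar>W (t k) \<omega> \<bullet> (\<beta> *v W (t k) \<omega>)\<bar> / t k \<le> \<epsilon>"
      using frequently_eventually_conj[OF elim(2,1)]
    proof (rule frequently_elim1)
      fix k assume small: "norm (W (t (Suc k)) \<omega>) \<le> \<delta> * sqrt (t k) \<and>
        norm (W (t k) \<omega> - W (t (Suc k)) \<omega>) \<le> \<delta> * sqrt (t k)"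
      have "norm (W (t k) \<omega>) \<le> norm (W (t (Suc k)) \<omega>) + norm (W (t k) \<omega> - W (t (Suc k)) \<omega>)"
        by (rule norm_triangle_sub)
      with small have "norm (W (t k) \<omega>) \<le> 2 * \<delta> * sqrt (t k)"
        by linarith
      have "\<bar>W (t k) \<omega> \<bullet> (\<beta> *v W (t k) \<omega>)\<bar> \<le> C * (norm (W (t k) \<omega>))\<^sup>2"
        by (rule C)
      also have "\<dots> \<le> C * (2 * \<delta> * sqrt (t k))\<^sup>2"
        using \<open>0 < C\<close> \<open>norm (W (t k) \<omega>) \<le> 2 * \<delta> * sqrt (t k)\<close>
        by (intro mult_left_mono power_mono) auto
      also have "\<dots> = \<epsilon> * t k"
        using t_pos[of k] \<open>4 * C * \<delta>\<^sup>2 = \<epsilon>\<close> by (simp add: power_mult_distrib)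
      finally show "\<bar>W (t k) \<omega> \<bullet> (\<beta> *v W (t k) \<omega>)\<bar> / t k \<le> \<epsilon>"
        using t_pos[of k] by (simp add: divide_le_eq)
    qed
    then show ?case
      by (intro Liminf_le_if_frequently frequently_filterlim_compose[OF t_lim]) simp
  qed
qed

theorem lemma3p5:
  fixes M :: "'a measure" and W :: "real \<Rightarrow> 'a \<Rightarrow> real^'d" and \<beta> :: "real^'d^'d"
  assumes "brownian_motion M W"
  shows "AE \<omega> in M.
           Liminf (at_right 0) (\<lambda>t. ereal (\<bar>W t \<omega> \<bullet> (\<beta> *v W t \<omega>)\<bar> / t)) = 0"
proof -
  have "AE \<omega> in M. \<forall>n. Liminf (at_right 0) (\<lambda>t. ereal (\<bar>W t \<omega> \<bullet> (\<beta> *v W t \<omega>)\<bar> / t))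
      \<le> 1 / Suc n"
    using brownian_motion_AE_Liminf_quadratic_form_le[OF assms] by (simp add: AE_all_countable)
  then show ?thesis
  proof eventually_elim
    case (elim \<omega>)
    let ?f = "\<lambda>t. ereal (\<bar>W t \<omega> \<bullet> (\<beta> *v W t \<omega>)\<bar> / t)"
    have "Liminf (at_right 0) ?f \<le> 0"
    proof (rule ereal_le_epsilon2)
      fix e :: real assume "0 < e"
      then obtain n where "1 / Suc n < e"
        using nat_approx_posE by blast
      have "Liminf (at_right 0) ?f \<le> ereal (1 / Suc n)"
        using elim by blast
      also have "\<dots> \<le> ereal e"
        using \<open>1 / Suc n < e\<close> by simp
      finally show "Liminf (at_right 0) ?f \<le> 0 + ereal e"
        by simp
    qed
    moreover have "0 \<le> Liminf (at_right 0) ?f"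
      by (intro Liminf_bounded eventually_mono[OF eventually_at_right_less]) simp
    ultimately show ?case
      by (rule antisym)
  qed
qed

end
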